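(* Let $n\ge 2$ be an integer, $A\subseteq L_n$, and let $B\subseteq L_n\setminus A$ be a closed uncountable subset of $(L_n,\tau_E|_{L_n})$ (for example, a subset homeomorphic to the Cantor set). Then $(X_n,\tau(A))$ is not Lindelöf.
   Context: For $\overline{x},\overline{a}\in\mathbb R^n$ let $|\overline{x}-\overline{a}|$ be the Euclidean distance and $B(\overline{a},\epsilon)=\{\overline{x}\in\mathbb R^n:|\overline{x}-\overline{a}|<\epsilon\}$. Let $P_n=\{\overline{x}\in\mathbb R^n: x_n>0\}$, $L_n=\{\overline{x}\in\mathbb R^n: x_n=0\}$, $X_n=P_n\cup L_n$, and let $\tau_E$ denote the Euclidean topology on $X_n$. For $\overline{a}\in L_n$ and $\epsilon>0$ put $\overline{a(\epsilon)}=(a_1,\dots,a_{n-1},\epsilon)$ and $\tilde B(\overline{a},\epsilon)=\{\overline{a}\}\cup B(\overline{a(\epsilon)},\epsilon)$. For $A\subseteq L_n$, the topology $\tau(A)$ on $X_n$ is generated by the local bases: at $\overline{a}\in P_n$, the sets $B(\overline{a},\epsilon)$ with $0<\epsilon<a_n$; at $\overline{a}\in A$, the sets $B(\overline{a},\epsilon)\cap X_n$ with $\epsilon>0$; at $\overline{a}\in L_n\setminus A$, the sets $\tilde B(\overline{a},\epsilon)$ with $\epsilon>0$. *)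

theory Defs
  imports "HOL-Analysis.Analysis"
begin

text \<open>Points of R^n are vectors of type real^'n; the distinguished index k plays
the role of the last coordinate x_n.\<close>

definition Pn :: "'n::finite \<Rightarrow> (real^'n) set" where
  "Pn k = {x. x $ k > 0}"

definition Ln :: "'n::finite \<Rightarrow> (real^'n) set" where
  "Ln k = {x. x $ k = 0}"

definition Xn :: "'n::finite \<Rightarrow> (real^'n) set" where
  "Xn k = Pn k \<union> Ln k"

definition lift :: "'n::finite \<Rightarrow> real^'n \<Rightarrow> real \<Rightarrow> real^'n" where
  "lift k a e = (\<chi> i. if i = k then e else a $ i)"

definition tauA :: "'n::finite \<Rightarrow> (real^'n) set \<Rightarrow> (real^'n) topology" where
  "tauA k A = topology_generated_by
     ({ball a e | a e. a \<in> Pn k \<and> 0 < e \<and> e < a $ k}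
      \<union> {ball a e \<inter> Xn k | a e. a \<in> A \<and> 0 < e}
      \<union> {insert a (ball (lift k a e) e) | a e. a \<in> Ln k - A \<and> 0 < e})"

end

theory Submission
  imports Defs
begin

text \<open>In a Lindel\<ouml>f space every closed subset whose points are all isolated is countable,
  since the closed subspace is again Lindel\<ouml>f and carries the discrete topology.
  In \<open>\<tau>(A)\<close> a point \<open>b \<in> L\<^sub>n - A\<close> has the neighbourhood \<open>{b} \<union> B(b(1), 1)\<close>, which meets
  \<open>L\<^sub>n\<close> only in \<open>b\<close>, so every subset of \<open>L\<^sub>n - A\<close> consists of isolated points; and
  \<open>\<tau>(A)\<close> is finer than the Euclidean topology of \<open>X\<^sub>n\<close>, so \<open>B\<close> is closed in it.
  Hence \<open>B\<close> would be countable.\<close>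

lemma Lindelof_space_discrete_topology:
  "Lindelof_space (discrete_topology U) \<longleftrightarrow> countable U"
proof
  assume "Lindelof_space (discrete_topology U)"
  then have "\<exists>\<V>. countable \<V> \<and> \<V> \<subseteq> (\<lambda>x. {x}) ` U \<and> \<Union>\<V> = topspace (discrete_topology U)"
    by (rule Lindelof_spaceD) auto
  then obtain \<V> where "countable \<V>" "\<V> \<subseteq> (\<lambda>x. {x}) ` U" "\<Union>\<V> = U"
    by auto
  then show "countable U"
    using countable_UN[of \<V> "\<lambda>V. V"] by auto
qed (simp add: countable_imp_Lindelof_space)

lemma countable_closedin_isolated_in_Lindelof_space:
  assumes "Lindelof_space X" and "closedin X B"
    and isolated: "\<And>b. b \<in> B \<Longrightarrow> \<exists>U. openin X U \<and> U \<inter> B = {b}"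
  shows "countable B"
proof -
  have "subtopology X B = discrete_topology B"
  proof (subst eq_commute, subst discrete_topology_unique, intro conjI ballI)
    show "topspace (subtopology X B) = B"
      using closedin_subset[OF \<open>closedin X B\<close>] by (rule topspace_subtopology_subset)
    show "openin (subtopology X B) {b}" if "b \<in> B" for b
      using isolated[OF that] unfolding openin_subtopology by blast
  qed
  moreover have "Lindelof_space (subtopology X B)"
    using assms(1,2) by (rule Lindelof_space_closedin_subtopology)
  ultimately show ?thesis
    by (simp add: Lindelof_space_discrete_topology)
qed

lemma ball_subset_Pn:
  assumes "e \<le> a $ k"
  shows "ball a e \<subseteq> Pn k"
proof
  fix y assume "y \<in> ball a e"
  have "\<bar>(a - y) $ k\<bar> \<le> norm (a - y)" by (rule component_le_norm_cart)
  also have "\<dots> < e" using \<open>y \<in> ball a e\<close> by (simp add: dist_norm)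
  finally show "y \<in> Pn k" using assms by (simp add: Pn_def)
qed

lemma lift_component [simp]: "lift k a e $ k = e"
  by (simp add: lift_def)

lemma lift_ball_subset_Pn: "ball (lift k a e) e \<subseteq> Pn k"
  by (simp add: ball_subset_Pn)

lemma dist_lift:
  assumes "a \<in> Ln k"
  shows "dist (lift k a e) a = \<bar>e\<bar>"
proof -
  have "lift k a e - a = e *\<^sub>R axis k 1"
    using assms by (simp add: Ln_def lift_def axis_def vec_eq_iff)
  then show ?thesis by (simp add: dist_norm)
qed

lemma tangent_ball_subset_ball:
  assumes "a \<in> Ln k" "0 < e"
  shows "insert a (ball (lift k a e) e) \<subseteq> ball a (2 * e) \<inter> Xn k"
proof -
  have "ball (lift k a e) e \<subseteq> ball a (2 * e)"
  proof
    fix y assume "y \<in> ball (lift k a e) e"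
    then have "dist a (lift k a e) + dist (lift k a e) y < 2 * e"
      using assms dist_lift[OF assms(1), of e] by (simp add: dist_commute)
    then show "y \<in> ball a (2 * e)"
      using dist_triangle[of a y "lift k a e"] by simp
  qed
  then show ?thesis
    using assms lift_ball_subset_Pn[of k a e] by (auto simp: Xn_def)
qed

lemma closed_Ln: "closed (Ln k)"
  unfolding Ln_def by (intro closed_Collect_eq continuous_intros)

lemma openin_tauA_ball:
  assumes "0 < e" "e < a $ k"
  shows "openin (tauA k A) (ball a e)"
proof -
  have "ball a e \<in> {ball a e | a e. a \<in> Pn k \<and> 0 < e \<and> e < a $ k}"
    using assms unfolding Pn_def by force
  then show ?thesis
    unfolding tauA_def by (intro topology_generated_by_Basis) blast
qed

lemma openin_tauA_ball_Int_Xn: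
  assumes "a \<in> A" "0 < e"
  shows "openin (tauA k A) (ball a e \<inter> Xn k)"
proof -
  have "ball a e \<inter> Xn k \<in> {ball a e \<inter> Xn k | a e. a \<in> A \<and> 0 < e}"
    using assms by blast
  then show ?thesis
    unfolding tauA_def by (intro topology_generated_by_Basis) blast
qed

lemma openin_tauA_tangent_ball:
  assumes "a \<in> Ln k - A" "0 < e"
  shows "openin (tauA k A) (insert a (ball (lift k a e) e))"
proof -
  have "insert a (ball (lift k a e) e) \<in> {insert a (ball (lift k a e) e) | a e. a \<in> Ln k - A \<and> 0 < e}"
    using assms by blast
  then show ?thesis
    unfolding tauA_def by (intro topology_generated_by_Basis) blast
qed

lemma topspace_tauA: "topspace (tauA k A) = Xn k"
proof
  have "ball a e \<subseteq> Xn k" if "e < a $ k" for a :: "real^'a" and e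
    using ball_subset_Pn[of e a k] that by (auto simp: Xn_def)
  moreover have "insert a (ball (lift k a e) e) \<subseteq> Xn k" if "a \<in> Ln k" for a e
    using lift_ball_subset_Pn[of k a e] that by (auto simp: Xn_def)
  ultimately show "topspace (tauA k A) \<subseteq> Xn k"
    unfolding tauA_def topology_generated_by_topspace by blast
next
  show "Xn k \<subseteq> topspace (tauA k A)"
  proof
    fix x assume "x \<in> Xn k"
    then consider "x \<in> A" | "x $ k > 0" | "x \<in> Ln k - A"
      by (auto simp: Xn_def Pn_def)
    then show "x \<in> topspace (tauA k A)"
    proof cases
      case 1
      then show ?thesis
        using openin_tauA_ball_Int_Xn[OF 1, of 1] \<open>x \<in> Xn k\<close> openin_subset by fastforce
    next
      case 2
      then show ?thesis
        using openin_tauA_ball[of "x $ k / 2" x k A] openin_subset by fastforce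
    next
      case 3
      then show ?thesis
        using openin_tauA_tangent_ball[OF 3, of 1] openin_subset by fastforce
    qed
  qed
qed

lemma openin_tauA_if_openin_Xn:
  assumes "openin (top_of_set (Xn k)) U"
  shows "openin (tauA k A) U"
proof (subst openin_subopen, intro ballI)
  fix x assume "x \<in> U"
  with assms obtain e where "e > 0" and e: "\<And>y. y \<in> Xn k \<Longrightarrow> dist y x < e \<Longrightarrow> y \<in> U"
    and "x \<in> Xn k"
    unfolding openin_euclidean_subtopology_iff by blast
  then have ball_U: "ball x e \<inter> Xn k \<subseteq> U"
    by (auto simp: dist_commute)
  consider "x \<in> A" | "x $ k > 0" | "x \<in> Ln k - A"
    using \<open>x \<in> Xn k\<close> by (auto simp: Xn_def Pn_def)
  then have "\<exists>V. openin (tauA k A) V \<and> x \<in> V \<and> V \<subseteq> ball x e \<inter> Xn k"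
  proof cases
    case 1
    show ?thesis
    proof (intro exI conjI)
      show "openin (tauA k A) (ball x e \<inter> Xn k)"
        using 1 \<open>e > 0\<close> by (rule openin_tauA_ball_Int_Xn)
    qed (use \<open>e > 0\<close> \<open>x \<in> Xn k\<close> in auto)
  next
    case 2
    define d where "d = min e (x $ k / 2)"
    have "0 < d" "d < x $ k" "d \<le> e"
      using 2 \<open>e > 0\<close> by (auto simp: d_def)
    show ?thesis
    proof (intro exI conjI)
      show "openin (tauA k A) (ball x d)"
        using \<open>0 < d\<close> \<open>d < x $ k\<close> by (rule openin_tauA_ball)
      show "ball x d \<subseteq> ball x e \<inter> Xn k"
        using ball_subset_Pn[of d x k] \<open>d < x $ k\<close> \<open>d \<le> e\<close> by (auto simp: Xn_def)
    qed (use \<open>0 < d\<close> in simp)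
  next
    case 3
    show ?thesis
    proof (intro exI conjI)
      show "openin (tauA k A) (insert x (ball (lift k x (e / 2)) (e / 2)))"
        using 3 \<open>e > 0\<close> by (intro openin_tauA_tangent_ball) auto
      show "insert x (ball (lift k x (e / 2)) (e / 2)) \<subseteq> ball x e \<inter> Xn k"
        using tangent_ball_subset_ball[of x k "e / 2"] 3 \<open>e > 0\<close> by simp
    qed simp
  qed
  then show "\<exists>V. openin (tauA k A) V \<and> x \<in> V \<and> V \<subseteq> U"
    using ball_U by blast
qed

lemma closedin_tauA_if_closedin_Ln:
  assumes "closedin (top_of_set (Ln k)) B"
  shows "closedin (tauA k A) B"
proof -
  have "closedin (top_of_set (Xn k)) (Ln k)"
    by (rule closed_subset[OF _ closed_Ln]) (auto simp: Xn_def)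
  with assms have "closedin (top_of_set (Xn k)) B"
    by (rule closedin_trans)
  then show ?thesis
    unfolding closedin_def topspace_tauA by (auto intro: openin_tauA_if_openin_Xn)
qed

lemma tauA_isolates_Ln_minus_A:
  assumes "a \<in> Ln k - A"
  shows "\<exists>U. openin (tauA k A) U \<and> U \<inter> Ln k = {a}"
proof (intro exI conjI)
  show "openin (tauA k A) (insert a (ball (lift k a 1) 1))"
    using assms by (rule openin_tauA_tangent_ball) simp
  show "insert a (ball (lift k a 1) 1) \<inter> Ln k = {a}"
    using assms lift_ball_subset_Pn[of k a 1] by (auto simp: Pn_def Ln_def)
qed

theorem mainTheorem14:
  fixes k :: "'n::finite" and A B :: "(real^'n) set"
  assumes "CARD('n) \<ge> 2"
    and "A \<subseteq> Ln k"
    and "B \<subseteq> Ln k - A"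
    and "closedin (top_of_set (Ln k)) B"
    and "uncountable B"
  shows "\<not> Lindelof_space (tauA k A)"
proof
  assume "Lindelof_space (tauA k A)"
  moreover have "closedin (tauA k A) B"
    using assms(4) by (rule closedin_tauA_if_closedin_Ln)
  moreover have "\<exists>U. openin (tauA k A) U \<and> U \<inter> B = {b}" if "b \<in> B" for b
  proof -
    have "b \<in> Ln k - A" using that assms(3) by blast
    then obtain U where "openin (tauA k A) U" "U \<inter> Ln k = {b}"
      using tauA_isolates_Ln_minus_A by blast
    moreover have "U \<inter> B = {b}"
      using \<open>U \<inter> Ln k = {b}\<close> that assms(3) by auto
    ultimately show ?thesis by blast
  qed
  ultimately have "countable B"
    by (rule countable_closedin_isolated_in_Lindelof_space)
  with assms(5) show False by simp
qed

end
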